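(* Consider a firm selling a single product in bundle sizes $i\in N=\{1,\dots,n\}$ to customer types $j\in M$. Suppose that for every $j\in M$, $d_{ij}(p)$ is (weakly) increasing in $p_k$ for all $k\ne i$, and $\sum_{i\in N}i\,d_{ij}(p)$ is (weakly) decreasing in each component of $p$. Let $f\in\mathbb{R}^n$ with $f_i=i$. Then $$\bar{\mathcal{R}}\le\beta\,\mathcal{R}^f\le\beta\,\mathcal{R}^*,\qquad \beta=1+\ln(q_{\max}/q_{\min}),$$ where $\mathcal{R}^*$ is the profit from the optimal non-personalized non-linear pricing policy and $\mathcal{R}^f$ is the optimal profit under the non-personalized linear pricing policy $p_i=iq$.
   Context: $p_i$ is the price of a size-$i$ bundle, $p=(p_1,\dots,p_n)$, and $d_{ij}(p)\ge0$ is the demand for size-$i$ bundles from customer type $j\in M=\{1,\dots,m\}$; type weights $\theta_j>0$, $\sum_j\theta_j=1$. $R_j(p)=\sum_ip_id_{ij}(p)$, $\mathcal{R}^*_j=\max_{p\ge0}R_j(p)$, $\bar{\mathcal{R}}=\sum_j\theta_j\mathcal{R}^*_j$ (optimal personalized non-linear pricing profit), $R(p)=\sum_j\theta_jR_j(p)$, $\mathcal{R}^*=\max_{p\ge0}R(p)$, $\mathcal{R}^f=\max_{q>0}R(qf)$. Standing assumption (A0): for each $j$, $R_j$ attains its maximum over $p\ge 0$ at a price vector $\bar p^j$ with positive finite components $\bar p_{ij}$. $q_{\min}=\min_{i,j}\bar p_{ij}/f_i=\min_{i,j}\bar p_{ij}/i$ and $q_{\max}=\max_{i,j}\bar p_{ij}/i$.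 *)

theory Defs
  imports Complex_Main
begin

text \<open>Demand d i j p is the demand for
  size-i bundles from customer type j at price vector p.\<close>

definition price_vecs :: "nat \<Rightarrow> (nat \<Rightarrow> real) set" where
  "price_vecs n = {p. (\<forall>i\<in>{1..n}. 0 \<le> p i) \<and> (\<forall>i. i \<notin> {1..n} \<longrightarrow> p i = 0)}"

definition rev_type :: "nat \<Rightarrow> (nat \<Rightarrow> nat \<Rightarrow> (nat \<Rightarrow> real) \<Rightarrow> real) \<Rightarrow> nat \<Rightarrow> (nat \<Rightarrow> real) \<Rightarrow> real" where
  "rev_type n d j p = (\<Sum>i=1..n. p i * d i j p)"

definition rev_total :: "nat \<Rightarrow> nat \<Rightarrow> (nat \<Rightarrow> nat \<Rightarrow> (nat \<Rightarrow> real) \<Rightarrow> real) \<Rightarrow> (nat \<Rightarrow> real) \<Rightarrow> (nat \<Rightarrow> real) \<Rightarrow> real" where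
  "rev_total n m d \<theta> p = (\<Sum>j=1..m. \<theta> j * rev_type n d j p)"

definition lin_price :: "nat \<Rightarrow> real \<Rightarrow> nat \<Rightarrow> real" where
  "lin_price n q = (\<lambda>i. if i \<in> {1..n} then q * real i else 0)"

definition R_star :: "nat \<Rightarrow> nat \<Rightarrow> (nat \<Rightarrow> nat \<Rightarrow> (nat \<Rightarrow> real) \<Rightarrow> real) \<Rightarrow> (nat \<Rightarrow> real) \<Rightarrow> real" where
  "R_star n m d \<theta> = (SUP p\<in>price_vecs n. rev_total n m d \<theta> p)"

definition R_f :: "nat \<Rightarrow> nat \<Rightarrow> (nat \<Rightarrow> nat \<Rightarrow> (nat \<Rightarrow> real) \<Rightarrow> real) \<Rightarrow> (nat \<Rightarrow> real) \<Rightarrow> real" where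
  "R_f n m d \<theta> = (SUP q\<in>{0<..}. rev_total n m d \<theta> (lin_price n q))"

end

theory Submission
  imports Defs
begin

text \<open>Write every personalized optimal price as \<open>p\<^sub>i\<^sub>j = i q\<^sub>i\<^sub>j\<close> and let
  \<open>0 < t\<^sub>1 < \<dots> < t\<^sub>r\<close> be the distinct ratios \<open>q\<^sub>i\<^sub>j\<close>, with \<open>t\<^sub>0 = 0\<close>
  (so \<open>t\<^sub>k\<^sub>-\<^sub>1 = prev_point Q t\<^sub>k\<close>).  Since \<open>q = \<Sum>\<^bsub>t\<^sub>k \<le> q\<^esub> (t\<^sub>k - t\<^sub>k\<^sub>-\<^sub>1)\<close>,
  the optimal revenue of type \<open>j\<close> is \<open>\<Sum>\<^sub>k (t\<^sub>k - t\<^sub>k\<^sub>-\<^sub>1)\<close> times the units it buys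
  in bundles with ratio at least \<open>t\<^sub>k\<close>.  These units are at most the units it buys at the
  linear price \<open>t\<^sub>k f\<close>: lowering the prices of those bundles to \<open>t\<^sub>k i\<close> can only increase
  their units, because it can only decrease the demand for the other bundles while it
  increases the total units; raising all other prices to \<open>t\<^sub>k i\<close> then only increases the
  demand for them.  Revenue at the linear price \<open>t\<^sub>k f\<close> is \<open>t\<^sub>k\<close> times the units sold,
  so the personalized optimum is at most
  \<open>R\<^sup>f \<Sum>\<^sub>k (1 - t\<^sub>k\<^sub>-\<^sub>1 / t\<^sub>k) \<le> R\<^sup>f (1 + ln (t\<^sub>r / t\<^sub>1))\<close>, using \<open>1 - x \<le> -ln x\<close>.\<close>


definition prev_point :: "real set \<Rightarrow> real \<Rightarrow> real" where
  "prev_point Q s = Max (insert 0 {x\<in>Q. x < s})"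

lemma prev_point_le: "finite Q \<Longrightarrow> 0 \<le> s \<Longrightarrow> prev_point Q s \<le> s"
  by (auto simp: prev_point_def)

lemma prev_point_insert_greater:
  "\<forall>a\<in>Q. a < M \<Longrightarrow> s \<le> M \<Longrightarrow> prev_point (insert M Q) s = prev_point Q s"
  unfolding prev_point_def by (rule arg_cong[where f = "\<lambda>X. Max (insert 0 X)"]) auto

lemma prev_point_above_all: "\<forall>a\<in>Q. a < M \<Longrightarrow> prev_point Q M = Max (insert 0 Q)"
  unfolding prev_point_def by (rule arg_cong[where f = "\<lambda>X. Max (insert 0 X)"]) auto

lemma prev_point_down_closed:
  "s \<le> q \<Longrightarrow> prev_point {x\<in>Q. x \<le> q} s = prev_point Q s"
  unfolding prev_point_def by (rule arg_cong[where f = "\<lambda>X. Max (insert 0 X)"]) auto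

lemma sum_prev_point_insert_greater:
  assumes "finite Q" "\<forall>a\<in>Q. a < M"
  shows "(\<Sum>s\<in>insert M Q. g s (prev_point (insert M Q) s))
       = g M (Max (insert 0 Q)) + (\<Sum>s\<in>Q. g s (prev_point Q s))"
proof -
  have "M \<notin> Q" using assms(2) by auto
  then have "(\<Sum>s\<in>insert M Q. g s (prev_point (insert M Q) s))
       = g M (prev_point (insert M Q) M) + (\<Sum>s\<in>Q. g s (prev_point (insert M Q) s))"
    using assms(1) by simp
  also have "\<dots> = g M (Max (insert 0 Q)) + (\<Sum>s\<in>Q. g s (prev_point Q s))"
    using assms(2)
    by (auto simp: prev_point_insert_greater prev_point_above_all less_imp_le intro!: sum.cong)
  finally show ?thesis .
qed

lemma sum_prev_point_gaps:
  assumes "finite Q" "Q \<subseteq> {0..}"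
  shows "(\<Sum>s\<in>Q. s - prev_point Q s) = Max (insert 0 Q)"
  using assms
proof (induction Q rule: finite_linorder_max_induct)
  case empty
  then show ?case by simp
next
  case (insert M Q)
  have "(\<Sum>s\<in>insert M Q. s - prev_point (insert M Q) s)
      = (M - Max (insert 0 Q)) + (\<Sum>s\<in>Q. s - prev_point Q s)"
    using insert.hyps by (rule sum_prev_point_insert_greater)
  also have "\<dots> = M"
    using insert by simp
  also have "M = Max (insert 0 (insert M Q))"
    using insert by (intro Max_eqI[symmetric]) (auto simp: less_imp_le)
  finally show ?case .
qed

lemma sum_prev_point_gaps_below:
  assumes "finite Q" "Q \<subseteq> {0..}" "q \<in> Q"
  shows "(\<Sum>s\<in>{s\<in>Q. s \<le> q}. s - prev_point Q s) = q"
proof -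
  have "(\<Sum>s\<in>{s\<in>Q. s \<le> q}. s - prev_point Q s)
      = (\<Sum>s\<in>{s\<in>Q. s \<le> q}. s - prev_point {x\<in>Q. x \<le> q} s)"
    by (intro sum.cong) (auto simp: prev_point_down_closed)
  also have "\<dots> = Max (insert 0 {s\<in>Q. s \<le> q})"
    using assms by (intro sum_prev_point_gaps) auto
  also have "\<dots> = q"
    using assms by (intro Max_eqI) auto
  finally show ?thesis .
qed

lemma sum_prev_point_gaps_div_le:
  assumes "finite Q" "Q \<noteq> {}" "Q \<subseteq> {0<..}"
  shows "(\<Sum>s\<in>Q. (s - prev_point Q s) / s) \<le> 1 + ln (Max Q / Min Q)"
  using assms
proof (induction Q rule: finite_linorder_max_induct)
  case empty
  then show ?case by simp
next
  case (insert M Q)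
  have M: "0 < M" using insert.prems by auto
  have sum_eq: "(\<Sum>s\<in>insert M Q. (s - prev_point (insert M Q) s) / s)
      = (M - Max (insert 0 Q)) / M + (\<Sum>s\<in>Q. (s - prev_point Q s) / s)"
    using insert.hyps by (rule sum_prev_point_insert_greater)
  show ?case
  proof (cases "Q = {}")
    case True
    then show ?thesis using sum_eq M by simp
  next
    case False
    define a b where "a = Max Q" and "b = Min Q"
    have ab: "0 < b" "b \<le> a" "a < M"
      using False insert by (auto simp: a_def b_def)
    have "Max (insert 0 Q) = a" "Max (insert M Q) = M" "Min (insert M Q) = b"
      using False insert ab by (auto simp: a_def b_def intro!: Max_eqI Min_eqI less_imp_le)
    moreover have "(\<Sum>s\<in>Q. (s - prev_point Q s) / s) \<le> 1 + ln (a / b)"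
      using False insert by (simp add: a_def b_def)
    moreover have "(M - a) / M \<le> ln (M / a)"
    proof -
      have "ln (a / M) \<le> a / M - 1" using ab by (intro ln_le_minus_one) auto
      then show ?thesis using ab by (simp add: ln_div diff_divide_distrib)
    qed
    moreover have "ln (M / b) = ln (M / a) + ln (a / b)"
      using ab by (simp add: ln_div)
    ultimately show ?thesis using sum_eq by simp
  qed
qed

definition units_sold :: "nat \<Rightarrow> (nat \<Rightarrow> (nat \<Rightarrow> real) \<Rightarrow> real) \<Rightarrow> (nat \<Rightarrow> real) \<Rightarrow> real" where
  "units_sold n e p = (\<Sum>i=1..n. real i * e i p)"

definition gross_substitutes :: "nat \<Rightarrow> (nat \<Rightarrow> (nat \<Rightarrow> real) \<Rightarrow> real) \<Rightarrow> bool" where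
  "gross_substitutes n e \<longleftrightarrow> (\<forall>i\<in>{1..n}. \<forall>k\<in>{1..n}. \<forall>p\<in>price_vecs n. \<forall>x.
     k \<noteq> i \<longrightarrow> p k \<le> x \<longrightarrow> e i p \<le> e i (p(k := x)))"

definition units_sold_antimono :: "nat \<Rightarrow> (nat \<Rightarrow> (nat \<Rightarrow> real) \<Rightarrow> real) \<Rightarrow> bool" where
  "units_sold_antimono n e \<longleftrightarrow> (\<forall>k\<in>{1..n}. \<forall>p\<in>price_vecs n. \<forall>x.
     p k \<le> x \<longrightarrow> units_sold n e (p(k := x)) \<le> units_sold n e p)"

lemma gross_substitutesD:
  "gross_substitutes n e \<Longrightarrow> i \<in> {1..n} \<Longrightarrow> k \<in> {1..n} \<Longrightarrow> p \<in> price_vecs n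
    \<Longrightarrow> k \<noteq> i \<Longrightarrow> p k \<le> x \<Longrightarrow> e i p \<le> e i (p(k := x))"
  unfolding gross_substitutes_def by blast

lemma units_sold_antimonoD:
  "units_sold_antimono n e \<Longrightarrow> k \<in> {1..n} \<Longrightarrow> p \<in> price_vecs n
    \<Longrightarrow> p k \<le> x \<Longrightarrow> units_sold n e (p(k := x)) \<le> units_sold n e p"
  unfolding units_sold_antimono_def by blast

lemma raise_prices_on:
  assumes subst: "gross_substitutes n e" and antimono: "units_sold_antimono n e"
    and "finite K" "K \<subseteq> {1..n}" and p: "p \<in> price_vecs n"
  shows "p' \<in> price_vecs n \<Longrightarrow> \<forall>i. p i \<le> p' i \<Longrightarrow> \<forall>i. i \<notin> K \<longrightarrow> p' i = p i \<Longrightarrow>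
    (\<forall>i\<in>{1..n} - K. e i p \<le> e i p') \<and> units_sold n e p' \<le> units_sold n e p"
  using \<open>finite K\<close> \<open>K \<subseteq> {1..n}\<close>
proof (induction K arbitrary: p' rule: finite_induct)
  case empty
  then have "p' = p" by auto
  then show ?case by simp
next
  case (insert k K)
  define p'' where "p'' = p'(k := p k)"
  have k: "k \<in> {1..n}" "k \<notin> K" using insert by auto
  have "p'' \<in> price_vecs n" "\<forall>i. p i \<le> p'' i" "\<forall>i. i \<notin> K \<longrightarrow> p'' i = p i"
    and "K \<subseteq> {1..n}"
    using insert.prems p k by (auto simp: p''_def price_vecs_def)
  then have IH: "\<forall>i\<in>{1..n} - K. e i p \<le> e i p''" "units_sold n e p'' \<le> units_sold n e p"
    and p'': "p'' \<in> price_vecs n"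
    using insert.IH by blast+
  have "p'' k \<le> p' k" using insert.prems by (simp add: p''_def)
  have p': "p''(k := p' k) = p'" by (simp add: p''_def)
  have "e i p'' \<le> e i (p''(k := p' k))" if "i \<in> {1..n}" "i \<noteq> k" for i
    using gross_substitutesD[OF subst that(1) k(1) p''] that(2) \<open>p'' k \<le> p' k\<close> by simp
  then have "\<forall>i\<in>{1..n} - insert k K. e i p \<le> e i p'"
    using IH(1) unfolding p' by (auto intro: order_trans)
  moreover have "units_sold n e (p''(k := p' k)) \<le> units_sold n e p''"
    using units_sold_antimonoD[OF antimono k(1) p'' \<open>p'' k \<le> p' k\<close>] .
  then have "units_sold n e p' \<le> units_sold n e p"
    using IH(2) unfolding p' by linarith
  ultimately show ?case by blast
qed

lemma raise_prices:
  assumes "gross_substitutes n e" "units_sold_antimono n e"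
    and "p \<in> price_vecs n" "p' \<in> price_vecs n" "\<forall>i. p i \<le> p' i"
  shows "\<forall>i\<in>{1..n}. p' i = p i \<longrightarrow> e i p \<le> e i p'"
    and "units_sold n e p' \<le> units_sold n e p"
proof -
  define K where "K = {i\<in>{1..n}. p' i \<noteq> p i}"
  have "\<forall>i. i \<notin> K \<longrightarrow> p' i = p i"
    using assms(3,4) by (auto simp: K_def price_vecs_def)
  then have "(\<forall>i\<in>{1..n} - K. e i p \<le> e i p') \<and> units_sold n e p' \<le> units_sold n e p"
    using assms by (intro raise_prices_on) (auto simp: K_def)
  then show "\<forall>i\<in>{1..n}. p' i = p i \<longrightarrow> e i p \<le> e i p'" "units_sold n e p' \<le> units_sold n e p"
    by (auto simp: K_def)
qed

lemma lin_price_in_price_vecs: "0 \<le> q \<Longrightarrow> lin_price n q \<in> price_vecs n"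
  by (auto simp: lin_price_def price_vecs_def)

lemma truncated_units_sold_le_linear:
  assumes subst: "gross_substitutes n e" and antimono: "units_sold_antimono n e"
    and nonneg: "\<forall>i\<in>{1..n}. \<forall>p\<in>price_vecs n. 0 \<le> e i p"
    and p: "p \<in> price_vecs n" and t: "0 \<le> t"
  shows "(\<Sum>i\<in>{i\<in>{1..n}. t * real i \<le> p i}. real i * e i p) \<le> units_sold n e (lin_price n t)"
proof -
  define S where "S = {i\<in>{1..n}. t * real i \<le> p i}"
  define p' where "p' = (\<lambda>i. if i \<in> S then t * real i else p i)"
  have p': "p' \<in> price_vecs n" "\<forall>i. p' i \<le> p i" "\<forall>i. p' i \<le> lin_price n t i"
    using p t by (auto simp: p'_def S_def price_vecs_def lin_price_def)
  have outside: "\<forall>i\<in>{1..n} - S. e i p' \<le> e i p"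
    and units: "units_sold n e p \<le> units_sold n e p'"
    using raise_prices[OF subst antimono p'(1) p p'(2)] by (auto simp: p'_def)
  have inside: "\<forall>i\<in>S. e i p' \<le> e i (lin_price n t)"
    using raise_prices(1)[OF subst antimono p'(1) lin_price_in_price_vecs[OF t] p'(3)]
    by (auto simp: p'_def S_def lin_price_def)
  have split: "units_sold n e q = (\<Sum>i\<in>{1..n} - S. real i * e i q) + (\<Sum>i\<in>S. real i * e i q)" for q
    unfolding units_sold_def by (rule sum.subset_diff) (auto simp: S_def)
  have "(\<Sum>i\<in>{1..n} - S. real i * e i p') \<le> (\<Sum>i\<in>{1..n} - S. real i * e i p)"
    using outside by (intro sum_mono mult_left_mono) auto
  then have "(\<Sum>i\<in>S. real i * e i p) \<le> (\<Sum>i\<in>S. real i * e i p')"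
    using units split[of p] split[of p'] by linarith
  also have "\<dots> \<le> (\<Sum>i\<in>S. real i * e i (lin_price n t))"
    using inside by (intro sum_mono mult_left_mono) auto
  also have "\<dots> \<le> units_sold n e (lin_price n t)"
    unfolding units_sold_def using nonneg lin_price_in_price_vecs[OF t]
    by (intro sum_mono2) (auto simp: S_def)
  finally show ?thesis unfolding S_def .
qed

lemma revenue_le_sum_gaps_units_sold:
  assumes subst: "gross_substitutes n e" and antimono: "units_sold_antimono n e"
    and nonneg: "\<forall>i\<in>{1..n}. \<forall>p\<in>price_vecs n. 0 \<le> e i p"
    and p: "p \<in> price_vecs n"
    and Q: "finite Q" "Q \<subseteq> {0..}" "\<forall>i\<in>{1..n}. p i / real i \<in> Q"
  shows "(\<Sum>i=1..n. p i * e i p) \<le> (\<Sum>s\<in>Q. (s - prev_point Q s) * units_sold n e (lin_price n s))"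
proof -
  have "(\<Sum>i=1..n. p i * e i p)
      = (\<Sum>i=1..n. real i * e i p * (\<Sum>s\<in>{s\<in>Q. s \<le> p i / real i}. s - prev_point Q s))"
    using Q by (intro sum.cong) (auto simp: sum_prev_point_gaps_below)
  also have "\<dots> = (\<Sum>i=1..n. \<Sum>s\<in>Q. (s - prev_point Q s) * (if s * real i \<le> p i then real i * e i p else 0))"
    using Q(1) by (intro sum.cong refl)
      (auto simp: sum.inter_filter sum_distrib_left pos_le_divide_eq mult_ac intro!: sum.cong)
  also have "\<dots> = (\<Sum>s\<in>Q. (s - prev_point Q s) * (\<Sum>i=1..n. if s * real i \<le> p i then real i * e i p else 0))"
    by (subst sum.swap) (simp add: sum_distrib_left)
  also have "\<dots> \<le> (\<Sum>s\<in>Q. (s - prev_point Q s) * units_sold n e (lin_price n s))"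
    unfolding sum.inter_filter[OF finite_atLeastAtMost, symmetric]
    using Q by (intro sum_mono mult_left_mono truncated_units_sold_le_linear[OF subst antimono nonneg p])
      (auto simp: prev_point_le)
  finally show ?thesis .
qed

lemma rev_type_lin_price:
  "rev_type n d j (lin_price n q) = q * units_sold n (\<lambda>i. d i j) (lin_price n q)"
  unfolding rev_type_def units_sold_def
  by (auto simp: sum_distrib_left lin_price_def mult_ac intro!: sum.cong)

lemma personalized_revenue_le_sum_gaps:
  assumes theta: "\<forall>j\<in>{1..m}. 0 \<le> \<theta> j"
    and subst: "\<forall>j\<in>{1..m}. gross_substitutes n (\<lambda>i. d i j)"
    and antimono: "\<forall>j\<in>{1..m}. units_sold_antimono n (\<lambda>i. d i j)"
    and nonneg: "\<forall>i\<in>{1..n}. \<forall>j\<in>{1..m}. \<forall>p\<in>price_vecs n. 0 \<le> d i j p"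
    and pbar: "\<forall>j\<in>{1..m}. pbar j \<in> price_vecs n"
    and Q: "finite Q" "Q \<subseteq> {0<..}" "\<forall>j\<in>{1..m}. \<forall>i\<in>{1..n}. pbar j i / real i \<in> Q"
  shows "(\<Sum>j=1..m. \<theta> j * rev_type n d j (pbar j))
    \<le> (\<Sum>s\<in>Q. (s - prev_point Q s) / s * rev_total n m d \<theta> (lin_price n s))"
proof -
  have "(\<Sum>j=1..m. \<theta> j * rev_type n d j (pbar j))
      \<le> (\<Sum>j=1..m. \<theta> j * (\<Sum>s\<in>Q. (s - prev_point Q s) * units_sold n (\<lambda>i. d i j) (lin_price n s)))"
    unfolding rev_type_def using assms
    by (intro sum_mono mult_left_mono revenue_le_sum_gaps_units_sold) auto
  also have "\<dots> = (\<Sum>s\<in>Q. \<Sum>j=1..m. \<theta> j * ((s - prev_point Q s) * units_sold n (\<lambda>i. d i j) (lin_price n s)))"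
    unfolding sum_distrib_left by (rule sum.swap)
  also have "\<dots> = (\<Sum>s\<in>Q. (s - prev_point Q s) / s * rev_total n m d \<theta> (lin_price n s))"
    using Q(2) unfolding rev_total_def rev_type_lin_price sum_distrib_left
    by (intro sum.cong refl) auto
  finally show ?thesis .
qed

lemma rev_total_le_personalized:
  assumes "\<forall>j\<in>{1..m}. 0 \<le> \<theta> j"
    and "\<forall>j\<in>{1..m}. \<forall>p\<in>price_vecs n. rev_type n d j p \<le> rev_type n d j (pbar j)"
    and "p \<in> price_vecs n"
  shows "rev_total n m d \<theta> p \<le> (\<Sum>j=1..m. \<theta> j * rev_type n d j (pbar j))"
  unfolding rev_total_def using assms by (intro sum_mono mult_left_mono) auto

lemma rev_total_lin_price_le_R_f:
  "bdd_above (rev_total n m d \<theta> ` price_vecs n) \<Longrightarrow> 0 < q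
    \<Longrightarrow> rev_total n m d \<theta> (lin_price n q) \<le> R_f n m d \<theta>"
  unfolding R_f_def
  by (rule cSUP_upper) (auto intro: bdd_above_mono simp: lin_price_in_price_vecs)

lemma R_f_le_R_star:
  "bdd_above (rev_total n m d \<theta> ` price_vecs n) \<Longrightarrow> R_f n m d \<theta> \<le> R_star n m d \<theta>"
  unfolding R_f_def R_star_def
  by (rule cSUP_mono) (auto intro!: bexI[OF _ lin_price_in_price_vecs])

lemma R_f_nonneg:
  assumes "bdd_above (rev_total n m d \<theta> ` price_vecs n)"
    and "\<forall>j\<in>{1..m}. 0 \<le> \<theta> j"
    and "\<forall>i\<in>{1..n}. \<forall>j\<in>{1..m}. \<forall>p\<in>price_vecs n. 0 \<le> d i j p"
  shows "0 \<le> R_f n m d \<theta>"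
proof -
  have "0 \<le> rev_total n m d \<theta> (lin_price n 1)"
    using assms(2,3) lin_price_in_price_vecs[of 1 n]
    unfolding rev_total_def rev_type_def by (intro sum_nonneg mult_nonneg_nonneg) (auto simp: lin_price_def)
  also have "\<dots> \<le> R_f n m d \<theta>"
    using assms(1) by (rule rev_total_lin_price_le_R_f) simp
  finally show ?thesis .
qed

lemma personalized_revenue_le_R_f:
  assumes theta: "\<forall>j\<in>{1..m}. 0 \<le> \<theta> j"
    and subst: "\<forall>j\<in>{1..m}. gross_substitutes n (\<lambda>i. d i j)"
    and antimono: "\<forall>j\<in>{1..m}. units_sold_antimono n (\<lambda>i. d i j)"
    and nonneg: "\<forall>i\<in>{1..n}. \<forall>j\<in>{1..m}. \<forall>p\<in>price_vecs n. 0 \<le> d i j p"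
    and pbar: "\<forall>j\<in>{1..m}. pbar j \<in> price_vecs n"
    and bdd: "bdd_above (rev_total n m d \<theta> ` price_vecs n)"
    and Q: "finite Q" "Q \<noteq> {}" "Q \<subseteq> {0<..}" "\<forall>j\<in>{1..m}. \<forall>i\<in>{1..n}. pbar j i / real i \<in> Q"
  shows "(\<Sum>j=1..m. \<theta> j * rev_type n d j (pbar j)) \<le> (1 + ln (Max Q / Min Q)) * R_f n m d \<theta>"
proof -
  have "(\<Sum>j=1..m. \<theta> j * rev_type n d j (pbar j))
      \<le> (\<Sum>s\<in>Q. (s - prev_point Q s) / s * rev_total n m d \<theta> (lin_price n s))"
    by (rule personalized_revenue_le_sum_gaps[OF theta subst antimono nonneg pbar Q(1,3,4)])
  also have "\<dots> \<le> (\<Sum>s\<in>Q. (s - prev_point Q s) / s * R_f n m d \<theta>)"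
    using Q by (intro sum_mono mult_left_mono rev_total_lin_price_le_R_f[OF bdd])
      (auto simp: prev_point_le)
  also have "\<dots> \<le> (1 + ln (Max Q / Min Q)) * R_f n m d \<theta>"
    unfolding sum_distrib_right[symmetric] using Q R_f_nonneg[OF bdd theta nonneg]
    by (intro mult_right_mono sum_prev_point_gaps_div_le)
  finally show ?thesis .
qed

theorem corollary4:
  fixes n m :: nat
    and d :: "nat \<Rightarrow> nat \<Rightarrow> (nat \<Rightarrow> real) \<Rightarrow> real"
    and \<theta> :: "nat \<Rightarrow> real"
    and pbar :: "nat \<Rightarrow> nat \<Rightarrow> real"
  assumes n_pos: "1 \<le> n" and m_pos: "1 \<le> m"
    and theta_pos: "\<forall>j\<in>{1..m}. 0 < \<theta> j"
    and theta_sum: "(\<Sum>j=1..m. \<theta> j) = 1"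
    and d_nonneg: "\<forall>i\<in>{1..n}. \<forall>j\<in>{1..m}. \<forall>p\<in>price_vecs n. 0 \<le> d i j p"
    and d_incr_other: "\<forall>j\<in>{1..m}. \<forall>i\<in>{1..n}. \<forall>k\<in>{1..n}. \<forall>p\<in>price_vecs n. \<forall>x.
           k \<noteq> i \<longrightarrow> p k \<le> x \<longrightarrow> d i j p \<le> d i j (p(k := x))"
    and total_decr: "\<forall>j\<in>{1..m}. \<forall>k\<in>{1..n}. \<forall>p\<in>price_vecs n. \<forall>x.
           p k \<le> x \<longrightarrow> (\<Sum>i=1..n. real i * d i j (p(k := x))) \<le> (\<Sum>i=1..n. real i * d i j p)"
    and pbar_vec: "\<forall>j\<in>{1..m}. pbar j \<in> price_vecs n"
    and pbar_pos: "\<forall>j\<in>{1..m}. \<forall>i\<in>{1..n}. 0 < pbar j i"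
    and pbar_opt: "\<forall>j\<in>{1..m}. \<forall>p\<in>price_vecs n. rev_type n d j p \<le> rev_type n d j (pbar j)"
  defines "\<beta> \<equiv> 1 + ln (Max {pbar j i / real i | i j. i \<in> {1..n} \<and> j \<in> {1..m}}
                        / Min {pbar j i / real i | i j. i \<in> {1..n} \<and> j \<in> {1..m}})"
    and "qmin \<equiv> Min {pbar j i / real i | i j. i \<in> {1..n} \<and> j \<in> {1..m}}"
    and "qmax \<equiv> Max {pbar j i / real i | i j. i \<in> {1..n} \<and> j \<in> {1..m}}"
    and "Rbar \<equiv> (\<Sum>j=1..m. \<theta> j * rev_type n d j (pbar j))"
  shows "Rbar \<le> \<beta> * R_f n m d \<theta> \<and> \<beta> * R_f n m d \<theta> \<le> \<beta> * R_star n m d \<theta>"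
proof -
  define Q where "Q = {pbar j i / real i | i j. i \<in> {1..n} \<and> j \<in> {1..m}}"
  have "Q = (\<lambda>(i, j). pbar j i / real i) ` ({1..n} \<times> {1..m})"
    unfolding Q_def by fastforce
  then have Q: "finite Q" "Q \<noteq> {}" "Q \<subseteq> {0<..}"
    using n_pos m_pos pbar_pos by auto
  have theta: "\<forall>j\<in>{1..m}. 0 \<le> \<theta> j" using theta_pos by (simp add: less_imp_le)
  have bdd: "bdd_above (rev_total n m d \<theta> ` price_vecs n)"
    using rev_total_le_personalized[OF theta pbar_opt] by (intro bdd_aboveI) blast
  have pbar_in_Q: "\<forall>j\<in>{1..m}. \<forall>i\<in>{1..n}. pbar j i / real i \<in> Q"
    unfolding Q_def by blast
  have subst: "\<forall>j\<in>{1..m}. gross_substitutes n (\<lambda>i. d i j)"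
    using d_incr_other by (simp add: gross_substitutes_def)
  have antimono: "\<forall>j\<in>{1..m}. units_sold_antimono n (\<lambda>i. d i j)"
    using total_decr by (simp add: units_sold_antimono_def units_sold_def)
  have "Rbar \<le> \<beta> * R_f n m d \<theta>"
    using personalized_revenue_le_R_f[OF theta subst antimono d_nonneg pbar_vec bdd Q pbar_in_Q]
    by (simp add: Rbar_def \<beta>_def Q_def)
  moreover have "0 < Min Q" "Min Q \<le> Max Q"
    using Q Min_in[of Q] by auto
  then have "\<beta> * R_f n m d \<theta> \<le> \<beta> * R_star n m d \<theta>"
    unfolding \<beta>_def Q_def[symmetric] by (simp add: mult_left_mono R_f_le_R_star[OF bdd])
  ultimately show ?thesis ..
qed

end
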